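(* Let $\phi:\mathbb{R}^{d}\to\mathbb{R}^{d}$ be a $C^{2}$ diffeomorphism, $x_{1},y_{1}\in\mathbb{R}^{d}$, $x_{j}=\phi^{j-1}(x_{1})$, $y_{j}=\phi^{j-1}(y_{1})$. Then the following matrices have rank equal to their number of rows: (a) the matrix $\binom{V(x_{1})}{V(y_{1})}$, provided $x_{1},\ldots,x_{D-1},y_{1},\ldots,y_{D-1}$ are distinct; (b) the matrix $\binom{V(x_{1})}{\mathfrak{m}_{k}}$, where $\mathfrak{m}_{k}$ consists of the first $k$ rows of $V(y_{1})$, provided $x_{1},\ldots,x_{D-1},y_{1},\ldots,y_{k}$ are distinct; (c) for an integer $D^{+}\leq2D$, the $(D^{+}-1)\times D_{\alpha}$ matrix whose rows $j=1,\ldots,D^{+}-1$ are the gradients with respect to $c$ at $c=0$ of $c\mapsto\pi_{1}\phi_{c}^{j}(x_{1})$, provided $x_{1},\ldots,x_{D^{+}-1}$ are distinct.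
   Context: $\pi_{1}$ is the first coordinate projection, $\mathbf{e}_{1}=(1,0,\ldots,0)$. For a multi-index $\alpha\in\mathbb{Z}_{\geq0}^{d}$, $p_{\alpha}(x)=\prod_i(\pi_{i}x)^{\alpha_{i}}$; $\mathcal{I}_{2D-1}$ is the set of multi-indices with $|\alpha|\leq2D-1$, of cardinality $D_{\alpha}$. For $c=(c_{\alpha})\in\mathbb{R}^{D_{\alpha}}$, $\phi_{c}(x)=\phi(x)+\mathbf{e}_{1}\sum_{\alpha\in\mathcal{I}_{2D-1}}c_{\alpha}p_{\alpha}(x)$. For $z\in\mathbb{R}^{d}$, $V(z)$ is the $(D-1)\times D_{\alpha}$ matrix whose row $j$ ($j=1,\ldots,D-1$) is the gradient with respect to $c$ at $c=0$ of $c\mapsto\pi_{1}\phi_{c}^{j}(z)$. *)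

theory Defs
  imports "HOL-Analysis.Analysis" "Jordan_Normal_Form.DL_Rank"
begin

text \<open>R^d is modelled by an arbitrary Euclidean space 'a; coordinates are
  inner products with the elements of Basis.\<close>

definition C2_map :: "('a::euclidean_space \<Rightarrow> 'a) \<Rightarrow> bool" where
  "C2_map f \<longleftrightarrow> (\<exists>Df :: 'a \<Rightarrow> ('a \<Rightarrow>\<^sub>L 'a). \<exists>D2f :: 'a \<Rightarrow> ('a \<Rightarrow>\<^sub>L ('a \<Rightarrow>\<^sub>L 'a)).
      (\<forall>x. (f has_derivative blinfun_apply (Df x)) (at x)) \<and>
      (\<forall>x. (Df has_derivative blinfun_apply (D2f x)) (at x)) \<and>
      continuous_on UNIV D2f)"

definition C2_diffeo :: "('a::euclidean_space \<Rightarrow> 'a) \<Rightarrow> bool" where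
  "C2_diffeo f \<longleftrightarrow> bij f \<and> C2_map f \<and> C2_map (inv_into UNIV f)"

definition mindices :: "nat \<Rightarrow> ('a::euclidean_space \<Rightarrow> nat) set" where
  "mindices D = {\<alpha>. (\<forall>b. b \<notin> Basis \<longrightarrow> \<alpha> b = 0) \<and> (\<Sum>b\<in>Basis. \<alpha> b) \<le> 2 * D - 1}"

definition pmono :: "('a::euclidean_space \<Rightarrow> nat) \<Rightarrow> 'a \<Rightarrow> real" where
  "pmono \<alpha> x = (\<Prod>b\<in>Basis. (x \<bullet> b) ^ (\<alpha> b))"

text \<open>The perturbed map phi_c; e1 is the distinguished first basis vector.\<close>
definition phi_c :: "('a::euclidean_space \<Rightarrow> 'a) \<Rightarrow> 'a \<Rightarrow> nat \<Rightarrow> (('a \<Rightarrow> nat) \<Rightarrow> real) \<Rightarrow> 'a \<Rightarrow> 'a" where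
  "phi_c \<phi> e1 D c x = \<phi> x + (\<Sum>\<alpha>\<in>mindices D. c \<alpha> * pmono \<alpha> x) *\<^sub>R e1"

definition grad_c0 :: "((('a \<Rightarrow> nat) \<Rightarrow> real) \<Rightarrow> real) \<Rightarrow> ('a \<Rightarrow> nat) \<Rightarrow> real" where
  "grad_c0 F \<alpha> = deriv (\<lambda>t. F (\<lambda>\<beta>. if \<beta> = \<alpha> then t else 0)) 0"

definition row_grad :: "('a::euclidean_space \<Rightarrow> 'a) \<Rightarrow> 'a \<Rightarrow> nat \<Rightarrow> 'a \<Rightarrow> nat \<Rightarrow> ('a \<Rightarrow> nat) \<Rightarrow> real" where
  "row_grad \<phi> e1 D z j = grad_c0 (\<lambda>c. ((phi_c \<phi> e1 D c) ^^ j) z \<bullet> e1)"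

definition Vrows :: "('a::euclidean_space \<Rightarrow> 'a) \<Rightarrow> 'a \<Rightarrow> nat \<Rightarrow> 'a \<Rightarrow> (('a \<Rightarrow> nat) \<Rightarrow> real) list" where
  "Vrows \<phi> e1 D z = map (row_grad \<phi> e1 D z) [1..<D]"

text \<open>A fixed enumeration of the column index set (an ordering of the
  multi-indices); the rank does not depend on it.\<close>
definition col_enum :: "nat \<Rightarrow> nat \<Rightarrow> ('a::euclidean_space \<Rightarrow> nat)" where
  "col_enum D = (SOME f. bij_betw f {..<card (mindices D :: ('a \<Rightarrow> nat) set)} (mindices D))"

definition rows_mat :: "nat \<Rightarrow> (('a::euclidean_space \<Rightarrow> nat) \<Rightarrow> real) list \<Rightarrow> real mat" where
  "rows_mat D rs = mat (length rs) (card (mindices D :: ('a \<Rightarrow> nat) set))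
      (\<lambda>(j, k). (rs ! j) (col_enum D k))"

definition mat_rank :: "real mat \<Rightarrow> nat" where
  "mat_rank A = vec_space.rank (dim_row A) A"

end

(*
  Differentiating c \<mapsto> \<pi>\<^sub>1 \<phi>_c^j(z) in the direction of a single coefficient c_\<alpha> gives, by the
  chain rule, \<Sum>_{i<j} p_\<alpha>(\<phi>^i z) (w_i \<bullet> e1), where the vectors w_i do not depend on \<alpha> and
  w_{j-1} = e1; only the differentiability of \<phi> is used. So each row of the matrices in question
  is the row of monomial values at one orbit point plus a combination of the rows at the earlier
  points of the list: the matrix is a unit lower triangular matrix times the evaluation matrix of
  at most 2D distinct points. That evaluation matrix has a right inverse: for each point, a product
  of affine functions, one vanishing at each other point but none at this one, is a polynomial of
  degree at most 2D - 1 that separates this point from the others.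
*)
theory Submission
  imports Defs
begin

no_notation Matrix.scalar_prod (infix \<open>\<bullet>\<close> 70)

section \<open>Rank via right inverses\<close>

lemma (in vec_space) rank_right_invertible:
  assumes A: "A \<in> carrier_mat n nc" and R: "R \<in> carrier_mat nc n" and AR: "A * R = 1\<^sub>m n"
  shows "rank A = n"
proof -
  have "v \<in> col_space A" if v: "v \<in> carrier_vec n" for v
  proof -
    have "A *\<^sub>v (R *\<^sub>v v) = v" using A R v AR by (simp add: assoc_mult_mat_vec[symmetric])
    then show ?thesis unfolding col_space_eq[OF A] using A R v by auto
  qed
  then have "span (set (cols A)) = carrier_vec n" using col_space_eq[OF A] A unfolding col_space_def by auto
  then have "rank A = vectorspace.dim class_ring (vs (carrier_vec n))" unfolding rank_def by simp
  also have "vs (carrier_vec n) = V" by simp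
  finally show ?thesis using dim_is_n by simp
qed

lemma unit_lower_triangular_right_inverse:
  fixes B :: "'a::field mat"
  assumes B: "B \<in> carrier_mat n n"
    and upper_zero: "\<And>i j. i < j \<Longrightarrow> j < n \<Longrightarrow> B $$ (i, j) = 0"
    and diag_one: "\<And>i. i < n \<Longrightarrow> B $$ (i, i) = 1"
  obtains B' where "B' \<in> carrier_mat n n" "B * B' = 1\<^sub>m n"
proof -
  have "det B = prod_list (diag_mat B)"
    by (rule det_lower_triangular[OF _ B]) (use upper_zero in auto)
  also have "diag_mat B = replicate n 1"
    using B diag_one by (intro nth_equalityI) (auto simp: diag_mat_def)
  finally have "det B \<noteq> 0" by simp
  from det_non_zero_imp_unit[OF B this, unfolded Units_def, of "()"] that show ?thesis
    by (auto simp: ring_mat_def)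
qed

lemma (in vec_space) rank_right_unit_lower_triangular:
  assumes A: "A \<in> carrier_mat n nc" and R: "R \<in> carrier_mat nc n" and AR: "A * R = B"
    and B: "B \<in> carrier_mat n n"
    and upper_zero: "\<And>i j. i < j \<Longrightarrow> j < n \<Longrightarrow> B $$ (i, j) = 0"
    and diag_one: "\<And>i. i < n \<Longrightarrow> B $$ (i, i) = 1"
  shows "rank A = n"
proof -
  obtain B' where B': "B' \<in> carrier_mat n n" "B * B' = 1\<^sub>m n"
    using unit_lower_triangular_right_inverse[OF B upper_zero diag_one] by blast
  have "A * (R * B') = 1\<^sub>m n"
    using AR B' by (simp add: assoc_mult_mat[OF A R B'(1), symmetric])
  then show ?thesis
    by (rule rank_right_invertible[OF A mult_carrier_mat[OF R B'(1)]])
qed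

section \<open>Polynomial functions and Lagrange interpolation\<close>

definition multi_indices :: "nat \<Rightarrow> ('a::euclidean_space \<Rightarrow> nat) set" where
  "multi_indices n = {\<alpha>. (\<forall>b. b \<notin> Basis \<longrightarrow> \<alpha> b = 0) \<and> (\<Sum>b\<in>Basis. \<alpha> b) \<le> n}"

definition poly_deg_le :: "nat \<Rightarrow> ('a::euclidean_space \<Rightarrow> real) \<Rightarrow> bool" where
  "poly_deg_le n f \<longleftrightarrow> (\<exists>c. f = (\<lambda>x. \<Sum>\<alpha>\<in>multi_indices n. c \<alpha> * pmono \<alpha> x))"

lemma mindices_eq_multi_indices: "mindices D = multi_indices (2 * D - 1)"
  unfolding mindices_def multi_indices_def by simp

lemma finite_multi_indices: "finite (multi_indices n :: ('a::euclidean_space \<Rightarrow> nat) set)"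
proof (rule finite_subset)
  show "multi_indices n \<subseteq> {\<alpha>. \<forall>b. (b \<in> (Basis::'a set) \<longrightarrow> \<alpha> b \<in> {..n}) \<and> (b \<notin> Basis \<longrightarrow> \<alpha> b = 0)}"
  proof
    fix \<alpha> :: "'a \<Rightarrow> nat"
    assume "\<alpha> \<in> multi_indices n"
    then have zero: "\<And>b. b \<notin> Basis \<Longrightarrow> \<alpha> b = 0" and deg: "(\<Sum>b\<in>Basis. \<alpha> b) \<le> n"
      unfolding multi_indices_def by auto
    have "\<alpha> b \<le> n" if "b \<in> Basis" for b
      using member_le_sum[of b Basis \<alpha>] that deg by auto
    then show "\<alpha> \<in> {\<alpha>. \<forall>b. (b \<in> (Basis::'a set) \<longrightarrow> \<alpha> b \<in> {..n}) \<and> (b \<notin> Basis \<longrightarrow> \<alpha> b = 0)}"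
      using zero by auto
  qed
  show "finite {\<alpha>. \<forall>b. (b \<in> (Basis::'a set) \<longrightarrow> \<alpha> b \<in> {..n}) \<and> (b \<notin> Basis \<longrightarrow> \<alpha> b = 0)}"
    by (rule finite_set_of_finite_funs) auto
qed

lemma multi_indices_mono: "m \<le> n \<Longrightarrow> multi_indices m \<subseteq> multi_indices n"
  unfolding multi_indices_def by auto

lemma multi_indices_0: "multi_indices 0 = {\<lambda>_. 0}"
  unfolding multi_indices_def by (auto simp: fun_eq_iff)

lemma poly_deg_le_mono:
  assumes "poly_deg_le m f" "m \<le> n"
  shows "poly_deg_le n f"
proof -
  obtain c where f: "f = (\<lambda>x. \<Sum>\<alpha>\<in>multi_indices m. c \<alpha> * pmono \<alpha> x)"
    using assms(1) unfolding poly_deg_le_def by blast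
  have "f x = (\<Sum>\<alpha>\<in>multi_indices n. (if \<alpha> \<in> multi_indices m then c \<alpha> else 0) * pmono \<alpha> x)" for x
    unfolding f
    by (rule sum.mono_neutral_cong_left) (use multi_indices_mono[OF assms(2)] finite_multi_indices in auto)
  then show ?thesis unfolding poly_deg_le_def by (intro exI ext)
qed

lemma poly_deg_le_const: "poly_deg_le n (\<lambda>x. a)"
proof -
  have "poly_deg_le 0 (\<lambda>x::'a. a)"
    unfolding poly_deg_le_def multi_indices_0 by (rule exI[of _ "\<lambda>_. a"]) (simp add: pmono_def)
  then show ?thesis by (rule poly_deg_le_mono) simp
qed

lemma poly_deg_le_add:
  assumes "poly_deg_le n f" "poly_deg_le n g"
  shows "poly_deg_le n (\<lambda>x. f x + g x)"
proof -
  obtain c d where "f = (\<lambda>x. \<Sum>\<alpha>\<in>multi_indices n. c \<alpha> * pmono \<alpha> x)"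
    and "g = (\<lambda>x. \<Sum>\<alpha>\<in>multi_indices n. d \<alpha> * pmono \<alpha> x)"
    using assms unfolding poly_deg_le_def by blast
  then show ?thesis unfolding poly_deg_le_def
    by (intro exI[of _ "\<lambda>\<alpha>. c \<alpha> + d \<alpha>"]) (simp add: sum.distrib algebra_simps)
qed

lemma poly_deg_le_cmult:
  assumes "poly_deg_le n f"
  shows "poly_deg_le n (\<lambda>x. a * f x)"
proof -
  obtain c where "f = (\<lambda>x. \<Sum>\<alpha>\<in>multi_indices n. c \<alpha> * pmono \<alpha> x)"
    using assms unfolding poly_deg_le_def by blast
  then show ?thesis unfolding poly_deg_le_def
    by (intro exI[of _ "\<lambda>\<alpha>. a * c \<alpha>"]) (simp add: sum_distrib_left algebra_simps)
qed

lemma poly_deg_le_sum: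
  assumes "finite S" "\<And>s. s \<in> S \<Longrightarrow> poly_deg_le n (f s)"
  shows "poly_deg_le n (\<lambda>x. \<Sum>s\<in>S. f s x)"
  using assms by (induction S rule: finite_induct) (simp_all add: poly_deg_le_const poly_deg_le_add)

lemma poly_deg_le_mult_coord:
  assumes "poly_deg_le n f" and b: "b \<in> Basis"
  shows "poly_deg_le (Suc n) (\<lambda>x. f x * (x \<bullet> b))"
proof -
  obtain c where f: "f = (\<lambda>x. \<Sum>\<alpha>\<in>multi_indices n. c \<alpha> * pmono \<alpha> x)"
    using assms unfolding poly_deg_le_def by blast
  define bump :: "('a \<Rightarrow> nat) \<Rightarrow> 'a \<Rightarrow> nat" where "bump \<alpha> = \<alpha>(b := Suc (\<alpha> b))" for \<alpha>
  have inj: "inj bump"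
  proof (rule injI)
    fix \<alpha> \<beta> assume eq: "bump \<alpha> = bump \<beta>"
    show "\<alpha> = \<beta>"
    proof
      fix x show "\<alpha> x = \<beta> x" using fun_cong[OF eq, of x] by (cases "x = b") (auto simp: bump_def)
    qed
  qed
  have pmono_bump: "pmono (bump \<alpha>) x = pmono \<alpha> x * (x \<bullet> b)" for \<alpha> x
    using b unfolding pmono_def bump_def by (simp add: prod.remove mult_ac)
  have bump_in: "bump ` multi_indices n \<subseteq> multi_indices (Suc n)"
    using b unfolding multi_indices_def bump_def by (auto simp: sum.remove)
  define c' where "c' \<gamma> = (if \<gamma> \<in> bump ` multi_indices n then c (the_inv bump \<gamma>) else 0)" for \<gamma>
  have "f x * (x \<bullet> b) = (\<Sum>\<gamma>\<in>multi_indices (Suc n). c' \<gamma> * pmono \<gamma> x)" for x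
  proof -
    have "f x * (x \<bullet> b) = (\<Sum>\<alpha>\<in>multi_indices n. c \<alpha> * pmono (bump \<alpha>) x)"
      unfolding f pmono_bump sum_distrib_right by (simp add: mult.assoc)
    also have "\<dots> = (\<Sum>\<gamma>\<in>bump ` multi_indices n. c' \<gamma> * pmono \<gamma> x)"
      using inj by (simp add: sum.reindex inj_on_def c'_def the_inv_f_f)
    also have "\<dots> = (\<Sum>\<gamma>\<in>multi_indices (Suc n). c' \<gamma> * pmono \<gamma> x)"
      by (rule sum.mono_neutral_left) (use bump_in finite_multi_indices in \<open>auto simp: c'_def\<close>)
    finally show ?thesis .
  qed
  then show ?thesis unfolding poly_deg_le_def by (intro exI ext)
qed

lemma poly_deg_le_mult_affine:
  assumes "poly_deg_le n f"
  shows "poly_deg_le (Suc n) (\<lambda>x. f x * (x \<bullet> u + a))"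
proof -
  have "f x * (x \<bullet> u + a) = (\<Sum>b\<in>Basis. (u \<bullet> b) * (f x * (x \<bullet> b))) + a * f x" for x
    by (simp add: euclidean_inner[of x u] algebra_simps sum_distrib_left sum_distrib_right)
  moreover have "poly_deg_le (Suc n) (\<lambda>x. \<Sum>b\<in>Basis. (u \<bullet> b) * (f x * (x \<bullet> b)))"
    by (intro poly_deg_le_sum poly_deg_le_cmult poly_deg_le_mult_coord assms) auto
  moreover have "poly_deg_le (Suc n) (\<lambda>x. a * f x)"
    by (intro poly_deg_le_cmult poly_deg_le_mono[OF assms]) auto
  ultimately show ?thesis by (simp add: poly_deg_le_add)
qed

lemma poly_deg_le_prod_affine:
  assumes "finite S"
  shows "poly_deg_le (card S) (\<lambda>x. \<Prod>l\<in>S. x \<bullet> u l + a l)"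
  using assms
proof (induction S rule: finite_induct)
  case empty
  then show ?case by (simp add: poly_deg_le_const)
next
  case (insert s S)
  then show ?case
    using poly_deg_le_mult_affine[OF insert.IH, of "u s" "a s"] by (simp add: mult.commute)
qed

lemma finite_mindices: "finite (mindices D :: ('a::euclidean_space \<Rightarrow> nat) set)"
  by (simp add: mindices_eq_multi_indices finite_multi_indices)

lemma lagrange_indicator_poly:
  fixes P :: "'a::euclidean_space list"
  assumes dist: "distinct P" and len: "length P \<le> Suc n" and i: "i < length P"
  shows "\<exists>c. \<forall>l<length P. (\<Sum>\<alpha>\<in>multi_indices n. c \<alpha> * pmono \<alpha> (P ! l)) = (if l = i then 1 else 0)"
proof -
  define S where "S = {..<length P} - {i}"
  define u where "u l = P ! i - P ! l" for l
  define q where "q x = (\<Prod>l\<in>S. x \<bullet> u l + - (P ! l \<bullet> u l))" for x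
  have q_vanishes: "q (P ! l) = 0" if "l \<in> S" for l
    using that unfolding q_def S_def by (intro prod_zero) auto
  have "q (P ! i) \<noteq> 0"
  proof -
    have "P ! i \<bullet> u l + - (P ! l \<bullet> u l) = u l \<bullet> u l" for l
      by (simp add: u_def inner_diff_left)
    moreover have "u l \<noteq> 0" if "l \<in> S" for l
      using that dist i unfolding S_def u_def by (simp add: nth_eq_iff_index_eq)
    ultimately show ?thesis unfolding q_def S_def by simp
  qed
  have "poly_deg_le (card S) q"
    unfolding q_def S_def by (rule poly_deg_le_prod_affine) simp
  then have "poly_deg_le n q"
    by (rule poly_deg_le_mono) (use len i in \<open>simp add: S_def\<close>)
  then have "poly_deg_le n (\<lambda>x. inverse (q (P ! i)) * q x)"
    by (rule poly_deg_le_cmult)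
  then obtain c where "(\<lambda>x. inverse (q (P ! i)) * q x) = (\<lambda>x. \<Sum>\<alpha>\<in>multi_indices n. c \<alpha> * pmono \<alpha> x)"
    unfolding poly_deg_le_def by blast
  note c = fun_cong[OF this]
  have "(\<Sum>\<alpha>\<in>multi_indices n. c \<alpha> * pmono \<alpha> (P ! l)) = (if l = i then 1 else 0)" if "l < length P" for l
    using that c[of "P ! l"] \<open>q (P ! i) \<noteq> 0\<close> q_vanishes by (auto simp: S_def)
  then show ?thesis by blast
qed

section \<open>Unit lower triangular multiples of evaluation matrices\<close>

definition unitriangular_evals ::
    "('a::euclidean_space \<Rightarrow> nat) set \<Rightarrow> (('a \<Rightarrow> nat) \<Rightarrow> real) list \<Rightarrow> 'a list \<Rightarrow> bool" where
  "unitriangular_evals M rs P \<longleftrightarrow> length rs = length P \<and>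
    (\<forall>j<length rs. \<exists>w. \<forall>\<alpha>\<in>M. (rs ! j) \<alpha> = pmono \<alpha> (P ! j) + (\<Sum>i<j. w i * pmono \<alpha> (P ! i)))"

lemma unitriangular_evals_append:
  assumes tri: "unitriangular_evals M rs P" and tri': "unitriangular_evals M rs' P'"
  shows "unitriangular_evals M (rs @ rs') (P @ P')"
proof -
  define m where "m = length P"
  have len: "length rs = m" using tri unfolding unitriangular_evals_def m_def by simp
  have "\<exists>w. \<forall>\<alpha>\<in>M. ((rs @ rs') ! j) \<alpha> =
      pmono \<alpha> ((P @ P') ! j) + (\<Sum>i<j. w i * pmono \<alpha> ((P @ P') ! i))"
    if j: "j < length (rs @ rs')" for j
  proof (cases "j < m")
    case True
    then obtain w where "\<forall>\<alpha>\<in>M. (rs ! j) \<alpha> = pmono \<alpha> (P ! j) + (\<Sum>i<j. w i * pmono \<alpha> (P ! i))"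
      using tri len unfolding unitriangular_evals_def by blast
    then show ?thesis
      using True len by (intro exI[of _ w]) (simp add: nth_append m_def)
  next
    case False
    define j' where "j' = j - m"
    have j_eq: "j = m + j'" using False unfolding j'_def by simp
    have "j' < length rs'" using j j_eq len by simp
    then obtain w where w: "\<forall>\<alpha>\<in>M. (rs' ! j') \<alpha> = pmono \<alpha> (P' ! j') + (\<Sum>i<j'. w i * pmono \<alpha> (P' ! i))"
      using tri' unfolding unitriangular_evals_def by blast
    define w' where "w' i = (if i < m then 0 else w (i - m))" for i
    have "(\<Sum>i<j'. w i * pmono \<alpha> (P' ! i)) = (\<Sum>i<j. w' i * pmono \<alpha> ((P @ P') ! i))" for \<alpha>
    proof -
      have "(\<Sum>i<j. w' i * pmono \<alpha> ((P @ P') ! i)) = (\<Sum>i\<in>{m..<j}. w' i * pmono \<alpha> ((P @ P') ! i))"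
        by (rule sum.mono_neutral_right) (auto simp: w'_def)
      also have "\<dots> = (\<Sum>i<j'. w i * pmono \<alpha> (P' ! i))"
        by (rule sum.reindex_bij_witness[of _ "\<lambda>i. m + i" "\<lambda>i. i - m"])
          (auto simp: j_eq w'_def nth_append m_def)
      finally show ?thesis by simp
    qed
    then show ?thesis
      using w len j_eq by (intro exI[of _ w']) (simp add: nth_append m_def)
  qed
  then show ?thesis
    using tri tri' unfolding unitriangular_evals_def by simp
qed

lemma col_enum_bij:
  "bij_betw (col_enum D) {..<card (mindices D :: ('a::euclidean_space \<Rightarrow> nat) set)}
    (mindices D :: ('a \<Rightarrow> nat) set)"
proof -
  obtain h :: "nat \<Rightarrow> 'a \<Rightarrow> nat" where "bij_betw h {0..<card (mindices D :: ('a \<Rightarrow> nat) set)} (mindices D)"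
    using ex_bij_betw_nat_finite[OF finite_mindices[where 'a='a]] by blast
  then show ?thesis unfolding col_enum_def atLeast0LessThan by (rule someI[where x=h])
qed

lemma rows_mat_mult_index:
  fixes rs :: "(('a::euclidean_space \<Rightarrow> nat) \<Rightarrow> real) list"
  assumes "j < length rs" "i < m"
  shows "(rows_mat D rs * mat (card (mindices D :: ('a \<Rightarrow> nat) set)) m (\<lambda>(k, i). c i (col_enum D k))) $$ (j, i)
    = (\<Sum>\<alpha>\<in>mindices D. (rs ! j) \<alpha> * c i \<alpha>)"
proof -
  have "(rows_mat D rs * mat (card (mindices D :: ('a \<Rightarrow> nat) set)) m (\<lambda>(k, i). c i (col_enum D k))) $$ (j, i)
      = (\<Sum>k<card (mindices D :: ('a \<Rightarrow> nat) set). (rs ! j) (col_enum D k) * c i (col_enum D k))"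
    using assms by (simp add: rows_mat_def scalar_prod_def lessThan_atLeast0)
  also have "\<dots> = (\<Sum>\<alpha>\<in>mindices D. (rs ! j) \<alpha> * c i \<alpha>)"
    by (rule sum.reindex_bij_betw[OF col_enum_bij])
  finally show ?thesis .
qed

lemma rows_mat_mult_right_inverse_evals:
  fixes P :: "'a::euclidean_space list"
  assumes n: "length rs = n"
    and rows: "\<forall>j<n. \<forall>\<alpha>\<in>mindices D. (rs ! j) \<alpha> = (\<Sum>l<n. b j l * pmono \<alpha> (P ! l))"
    and inv: "\<forall>i<n. \<forall>l<n. (\<Sum>\<alpha>\<in>mindices D. c i \<alpha> * pmono \<alpha> (P ! l)) = (if l = i then 1 else 0)"
  shows "rows_mat D rs * mat (card (mindices D :: ('a \<Rightarrow> nat) set)) n (\<lambda>(k, i). c i (col_enum D k))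
    = mat n n (\<lambda>(j, l). b j l)"
proof (rule eq_matI)
  fix j i assume "j < dim_row (mat n n (\<lambda>(j, l). b j l))" "i < dim_col (mat n n (\<lambda>(j, l). b j l))"
  then have j: "j < n" and i: "i < n" by auto
  have row_c: "(rs ! j) \<alpha> * c i \<alpha> = (\<Sum>l<n. b j l * (c i \<alpha> * pmono \<alpha> (P ! l)))"
    if "\<alpha> \<in> mindices D" for \<alpha>
    using rows j that by (simp add: sum_distrib_left mult_ac)
  have "(rows_mat D rs * mat (card (mindices D :: ('a \<Rightarrow> nat) set)) n (\<lambda>(k, i). c i (col_enum D k))) $$ (j, i)
      = (\<Sum>\<alpha>\<in>mindices D. (rs ! j) \<alpha> * c i \<alpha>)"
    using j i n by (intro rows_mat_mult_index) auto
  also have "\<dots> = (\<Sum>\<alpha>\<in>mindices D. \<Sum>l<n. b j l * (c i \<alpha> * pmono \<alpha> (P ! l)))"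
    by (rule sum.cong[OF refl row_c])
  also have "\<dots> = (\<Sum>l<n. b j l * (\<Sum>\<alpha>\<in>mindices D. c i \<alpha> * pmono \<alpha> (P ! l)))"
    by (subst sum.swap) (simp add: sum_distrib_left)
  also have "\<dots> = (\<Sum>l<n. if l = i then b j l else 0)"
    by (rule sum.cong) (use inv i in auto)
  also have "\<dots> = mat n n (\<lambda>(j, l). b j l) $$ (j, i)"
    using i j by simp
  finally show "(rows_mat D rs * mat (card (mindices D :: ('a \<Rightarrow> nat) set)) n (\<lambda>(k, i). c i (col_enum D k))) $$ (j, i)
      = mat n n (\<lambda>(j, l). b j l) $$ (j, i)" .
qed (use n in \<open>auto simp: rows_mat_def\<close>)

lemma rank_rows_mat_unitriangular_evals:
  fixes P :: "'a::euclidean_space list"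
  assumes dist: "distinct P" and len: "length P \<le> 2 * D"
    and tri: "unitriangular_evals (mindices D) rs P"
  shows "mat_rank (rows_mat D rs) = length rs"
proof -
  define n where "n = length rs"
  have lenP: "length P = n" using tri unfolding unitriangular_evals_def n_def by simp
  have "\<forall>j<n. \<exists>w. \<forall>\<alpha>\<in>mindices D. (rs ! j) \<alpha> = pmono \<alpha> (P ! j) + (\<Sum>i<j. w i * pmono \<alpha> (P ! i))"
    using tri unfolding unitriangular_evals_def n_def by (rule conjunct2)
  then obtain W where W: "\<forall>j<n. \<forall>\<alpha>\<in>mindices D.
      (rs ! j) \<alpha> = pmono \<alpha> (P ! j) + (\<Sum>i<j. W j i * pmono \<alpha> (P ! i))"
    unfolding choice_iff' by blast
  have "\<forall>i<n. \<exists>c. \<forall>l<n. (\<Sum>\<alpha>\<in>mindices D. c \<alpha> * pmono \<alpha> (P ! l)) = (if l = i then 1 else 0)"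
  proof (intro allI impI)
    fix i assume "i < n"
    have le: "length P \<le> Suc (2 * D - 1)" using len by simp
    have "i < length P" using \<open>i < n\<close> lenP by simp
    from lagrange_indicator_poly[OF dist le this]
    show "\<exists>c. \<forall>l<n. (\<Sum>\<alpha>\<in>mindices D. c \<alpha> * pmono \<alpha> (P ! l)) = (if l = i then 1 else 0)"
      unfolding mindices_eq_multi_indices lenP .
  qed
  then obtain c where c: "\<forall>i<n. \<forall>l<n.
      (\<Sum>\<alpha>\<in>mindices D. c i \<alpha> * pmono \<alpha> (P ! l)) = (if l = i then 1 else 0)"
    unfolding choice_iff' by blast
  define b where "b j l = (if l = j then 1 else if l < j then W j l else 0)" for j l
  have "(rs ! j) \<alpha> = (\<Sum>l<n. b j l * pmono \<alpha> (P ! l))" if j: "j < n" and \<alpha>: "\<alpha> \<in> mindices D" for j \<alpha>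
  proof -
    have "(\<Sum>l<n. b j l * pmono \<alpha> (P ! l)) = (\<Sum>l<Suc j. b j l * pmono \<alpha> (P ! l))"
      using j by (intro sum.mono_neutral_right) (auto simp: b_def)
    also have "\<dots> = (rs ! j) \<alpha>"
      using W j \<alpha> by (simp add: b_def)
    finally show ?thesis by simp
  qed
  then have AR: "rows_mat D rs * mat (card (mindices D :: ('a \<Rightarrow> nat) set)) n (\<lambda>(k, i). c i (col_enum D k))
      = mat n n (\<lambda>(j, l). b j l)"
    using c n_def by (intro rows_mat_mult_right_inverse_evals) auto
  have "vec_space.rank n (rows_mat D rs) = n"
    by (rule vec_space.rank_right_unit_lower_triangular[OF _ _ AR]) (auto simp: rows_mat_def n_def b_def)
  then show ?thesis unfolding mat_rank_def by (simp add: rows_mat_def n_def)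
qed

section \<open>Derivatives of the perturbed iterates\<close>

lemma phi_c_zero: "phi_c \<phi> e1 D (\<lambda>_. 0) = \<phi>"
  unfolding phi_c_def by (simp add: fun_eq_iff)

lemma phi_c_single_coeff:
  assumes "\<alpha> \<in> mindices D"
  shows "phi_c \<phi> e1 D (\<lambda>\<beta>. if \<beta> = \<alpha> then t else 0) x = \<phi> x + (t * pmono \<alpha> x) *\<^sub>R e1"
proof -
  have "(\<Sum>\<beta>\<in>mindices D. (if \<beta> = \<alpha> then t else 0) * pmono \<beta> x)
      = (\<Sum>\<beta>\<in>mindices D. if \<beta> = \<alpha> then t * pmono \<beta> x else 0)"
    by (rule sum.cong) auto
  also have "\<dots> = t * pmono \<alpha> x"
    using assms by (simp add: finite_mindices)
  finally show ?thesis unfolding phi_c_def by simp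
qed

lemma isCont_pmono: "isCont (pmono \<alpha>) x"
  unfolding pmono_def[abs_def] by (intro continuous_intros)

lemma has_field_derivative_times_isCont:
  fixes g :: "real \<Rightarrow> real"
  assumes "isCont g 0"
  shows "((\<lambda>t. t * g t) has_field_derivative g 0) (at 0)"
  using assms by (intro CARAT_DERIV[THEN iffD2] exI[of _ g]) simp

lemma has_vector_derivative_phi_c_single_coeff:
  fixes \<phi> :: "'a::euclidean_space \<Rightarrow> 'a"
  assumes \<phi>': "(\<phi> has_derivative \<phi>') (at (F 0))" and F: "(F has_vector_derivative V) (at 0)"
    and \<alpha>: "\<alpha> \<in> mindices D"
  shows "((\<lambda>t. phi_c \<phi> e1 D (\<lambda>\<beta>. if \<beta> = \<alpha> then t else 0) (F t))
    has_vector_derivative \<phi>' V + pmono \<alpha> (F 0) *\<^sub>R e1) (at 0)"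
proof -
  have "((\<lambda>t. \<phi> (F t)) has_vector_derivative \<phi>' V) (at 0)"
    using has_derivative_compose[OF F[unfolded has_vector_derivative_def] \<phi>'] has_derivative_linear[OF \<phi>']
    by (simp add: has_vector_derivative_def linear_scale)
  moreover have "((\<lambda>t. (t * pmono \<alpha> (F t)) *\<^sub>R e1) has_vector_derivative pmono \<alpha> (F 0) *\<^sub>R e1) (at 0)"
  proof -
    have "isCont (\<lambda>t. pmono \<alpha> (F t)) 0"
      using has_vector_derivative_continuous[OF F] isCont_pmono by (rule isCont_o2)
    from has_vector_derivative_scaleR[OF has_field_derivative_times_isCont[OF this]
        has_vector_derivative_const[of e1]]
    show ?thesis by simp
  qed
  ultimately have "((\<lambda>t. \<phi> (F t) + (t * pmono \<alpha> (F t)) *\<^sub>R e1)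
      has_vector_derivative \<phi>' V + pmono \<alpha> (F 0) *\<^sub>R e1) (at 0)"
    by (rule has_vector_derivative_add)
  then show ?thesis
    using \<alpha> by (simp add: phi_c_single_coeff)
qed

lemma has_vector_derivative_phi_c_iterate:
  fixes \<phi> :: "'a::euclidean_space \<Rightarrow> 'a"
  assumes \<phi>': "\<And>x. (\<phi> has_derivative \<phi>' x) (at x)"
  shows "\<exists>w. (0 < j \<longrightarrow> w (j - 1) = e1) \<and> (\<forall>\<alpha>\<in>mindices D.
    ((\<lambda>t. (phi_c \<phi> e1 D (\<lambda>\<beta>. if \<beta> = \<alpha> then t else 0) ^^ j) z)
      has_vector_derivative (\<Sum>i<j. pmono \<alpha> ((\<phi> ^^ i) z) *\<^sub>R w i)) (at 0))"
proof (induction j)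
  case 0
  show ?case by (simp add: has_vector_derivative_const)
next
  case (Suc j)
  then obtain w where w: "\<forall>\<alpha>\<in>mindices D.
    ((\<lambda>t. (phi_c \<phi> e1 D (\<lambda>\<beta>. if \<beta> = \<alpha> then t else 0) ^^ j) z)
      has_vector_derivative (\<Sum>i<j. pmono \<alpha> ((\<phi> ^^ i) z) *\<^sub>R w i)) (at 0)"
    by blast
  define zj where "zj = (\<phi> ^^ j) z"
  define w' where "w' i = (if i = j then e1 else \<phi>' zj (w i))" for i
  have "((\<lambda>t. (phi_c \<phi> e1 D (\<lambda>\<beta>. if \<beta> = \<alpha> then t else 0) ^^ Suc j) z)
      has_vector_derivative (\<Sum>i<Suc j. pmono \<alpha> ((\<phi> ^^ i) z) *\<^sub>R w' i)) (at 0)"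
    if \<alpha>: "\<alpha> \<in> mindices D" for \<alpha>
  proof -
    define F where "F t = (phi_c \<phi> e1 D (\<lambda>\<beta>. if \<beta> = \<alpha> then t else 0) ^^ j) z" for t
    have F0: "F 0 = zj"
      unfolding F_def zj_def by (simp add: phi_c_zero)
    have FV: "(F has_vector_derivative (\<Sum>i<j. pmono \<alpha> ((\<phi> ^^ i) z) *\<^sub>R w i)) (at 0)"
      using w \<alpha> unfolding F_def by blast
    have "(\<phi> has_derivative \<phi>' zj) (at (F 0))"
      using \<phi>' F0 by simp
    from has_vector_derivative_phi_c_single_coeff[OF this FV \<alpha>]
    have "((\<lambda>t. phi_c \<phi> e1 D (\<lambda>\<beta>. if \<beta> = \<alpha> then t else 0) (F t)) has_vector_derivative
        \<phi>' zj (\<Sum>i<j. pmono \<alpha> ((\<phi> ^^ i) z) *\<^sub>R w i) + pmono \<alpha> zj *\<^sub>R e1) (at 0)"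
      by (simp add: F0)
    moreover have "\<phi>' zj (\<Sum>i<j. pmono \<alpha> ((\<phi> ^^ i) z) *\<^sub>R w i) + pmono \<alpha> zj *\<^sub>R e1
        = (\<Sum>i<Suc j. pmono \<alpha> ((\<phi> ^^ i) z) *\<^sub>R w' i)"
      using has_derivative_linear[OF \<phi>'] by (simp add: w'_def zj_def linear_sum linear_scale)
    ultimately show ?thesis by (simp add: F_def)
  qed
  then show ?case by (intro exI[of _ w']) (simp add: w'_def)
qed

lemma row_grad_unitriangular:
  fixes \<phi> :: "'a::euclidean_space \<Rightarrow> 'a"
  assumes \<phi>': "\<And>x. (\<phi> has_derivative \<phi>' x) (at x)" and e1: "e1 \<in> Basis"
  shows "\<exists>w. \<forall>\<alpha>\<in>mindices D. row_grad \<phi> e1 D z (Suc j) \<alpha> =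
    pmono \<alpha> ((\<phi> ^^ j) z) + (\<Sum>i<j. w i * pmono \<alpha> ((\<phi> ^^ i) z))"
proof -
  obtain w where w_last: "0 < Suc j \<longrightarrow> w (Suc j - 1) = e1" and w: "\<forall>\<alpha>\<in>mindices D.
    ((\<lambda>t. (phi_c \<phi> e1 D (\<lambda>\<beta>. if \<beta> = \<alpha> then t else 0) ^^ Suc j) z)
      has_vector_derivative (\<Sum>i<Suc j. pmono \<alpha> ((\<phi> ^^ i) z) *\<^sub>R w i)) (at 0)"
    using has_vector_derivative_phi_c_iterate[OF \<phi>', of "Suc j" e1 D z] by blast
  have "row_grad \<phi> e1 D z (Suc j) \<alpha> =
      pmono \<alpha> ((\<phi> ^^ j) z) + (\<Sum>i<j. (w i \<bullet> e1) * pmono \<alpha> ((\<phi> ^^ i) z))"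
    if \<alpha>: "\<alpha> \<in> mindices D" for \<alpha>
  proof -
    let ?V = "\<Sum>i<Suc j. pmono \<alpha> ((\<phi> ^^ i) z) *\<^sub>R w i"
    have "((\<lambda>t. (phi_c \<phi> e1 D (\<lambda>\<beta>. if \<beta> = \<alpha> then t else 0) ^^ Suc j) z \<bullet> e1)
        has_field_derivative ?V \<bullet> e1) (at 0)"
      unfolding has_real_derivative_iff_has_vector_derivative
      using bounded_linear.has_vector_derivative[OF bounded_linear_inner_left w[rule_format, OF \<alpha>]] .
    then have "row_grad \<phi> e1 D z (Suc j) \<alpha> = ?V \<bullet> e1"
      unfolding row_grad_def grad_c0_def by (rule DERIV_imp_deriv)
    also have "\<dots> = (\<Sum>i<j. pmono \<alpha> ((\<phi> ^^ i) z) * (w i \<bullet> e1)) + pmono \<alpha> ((\<phi> ^^ j) z) * (w j \<bullet> e1)"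
      by (simp only: sum.lessThan_Suc inner_add_left inner_sum_left inner_scaleR_left)
    also have "\<dots> = pmono \<alpha> ((\<phi> ^^ j) z) + (\<Sum>i<j. (w i \<bullet> e1) * pmono \<alpha> ((\<phi> ^^ i) z))"
      using w_last e1 by (simp add: inner_Basis ac_simps)
    finally show ?thesis .
  qed
  then show ?thesis
    by (intro exI[of _ "\<lambda>i. w i \<bullet> e1"] ballI)
qed

lemma unitriangular_evals_orbit:
  fixes \<phi> :: "'a::euclidean_space \<Rightarrow> 'a"
  assumes "\<And>x. (\<phi> has_derivative \<phi>' x) (at x)" and "e1 \<in> Basis"
  shows "unitriangular_evals (mindices D) (map (row_grad \<phi> e1 D z) [1..<Suc n]) (map (\<lambda>j. (\<phi> ^^ j) z) [0..<n])"
  unfolding unitriangular_evals_def using row_grad_unitriangular[OF assms] by (simp del: upt_Suc)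

lemma Vrows_eq: "Vrows \<phi> e1 D z = map (row_grad \<phi> e1 D z) [1..<Suc (D - 1)]"
  unfolding Vrows_def by (cases D) (simp_all del: upt_Suc)

lemma take_Vrows:
  assumes "k \<le> D - 1"
  shows "take k (Vrows \<phi> e1 D z) = map (row_grad \<phi> e1 D z) [1..<Suc k]"
  using assms unfolding Vrows_eq by (simp add: take_map take_upt del: upt_Suc)

lemma rank_Vrows_append_take:
  fixes \<phi> :: "'a::euclidean_space \<Rightarrow> 'a"
  assumes \<phi>': "\<And>x. (\<phi> has_derivative \<phi>' x) (at x)" and e1: "e1 \<in> Basis" and k: "k \<le> D - 1"
    and dist: "distinct (map (\<lambda>j. (\<phi> ^^ j) x1) [0..<D - 1] @ map (\<lambda>j. (\<phi> ^^ j) y1) [0..<k])"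
  shows "mat_rank (rows_mat D (Vrows \<phi> e1 D x1 @ take k (Vrows \<phi> e1 D y1))) = (D - 1) + k"
proof -
  note orbit = unitriangular_evals_orbit[OF \<phi>' e1]
  have "unitriangular_evals (mindices D) (Vrows \<phi> e1 D x1 @ take k (Vrows \<phi> e1 D y1))
      (map (\<lambda>j. (\<phi> ^^ j) x1) [0..<D - 1] @ map (\<lambda>j. (\<phi> ^^ j) y1) [0..<k])"
    unfolding take_Vrows[OF k] Vrows_eq[of _ _ _ x1] by (rule unitriangular_evals_append[OF orbit orbit])
  from rank_rows_mat_unitriangular_evals[OF dist _ this] k show ?thesis
    by (simp add: Vrows_def)
qed

lemma rank_row_grad_orbit:
  fixes \<phi> :: "'a::euclidean_space \<Rightarrow> 'a"
  assumes \<phi>': "\<And>x. (\<phi> has_derivative \<phi>' x) (at x)" and e1: "e1 \<in> Basis" and Dp: "Dp \<le> 2 * D"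
    and dist: "distinct (map (\<lambda>j. (\<phi> ^^ j) x1) [0..<Dp - 1])"
  shows "mat_rank (rows_mat D (map (row_grad \<phi> e1 D x1) [1..<Dp])) = Dp - 1"
proof -
  have len: "length (map (\<lambda>j. (\<phi> ^^ j) x1) [0..<Dp - 1]) \<le> 2 * D"
    using Dp by simp
  have "[1..<Dp] = [1..<Suc (Dp - 1)]"
    by (cases Dp) simp_all
  with rank_rows_mat_unitriangular_evals[OF dist len unitriangular_evals_orbit[OF \<phi>' e1]]
  show ?thesis by (simp del: upt_Suc)
qed

theorem lemma11:
  fixes \<phi> :: "'a::euclidean_space \<Rightarrow> 'a" and e1 x1 y1 :: 'a and D k Dp :: nat
  assumes "C2_diffeo \<phi>" and "e1 \<in> Basis"
  shows
    "(distinct (map (\<lambda>j. (\<phi> ^^ j) x1) [0..<D - 1] @ map (\<lambda>j. (\<phi> ^^ j) y1) [0..<D - 1])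
        \<longrightarrow> mat_rank (rows_mat D (Vrows \<phi> e1 D x1 @ Vrows \<phi> e1 D y1))
            = 2 * (D - 1))
   \<and> (k \<le> D - 1 \<and>
      distinct (map (\<lambda>j. (\<phi> ^^ j) x1) [0..<D - 1] @ map (\<lambda>j. (\<phi> ^^ j) y1) [0..<k])
        \<longrightarrow> mat_rank (rows_mat D (Vrows \<phi> e1 D x1 @ take k (Vrows \<phi> e1 D y1)))
            = (D - 1) + k)
   \<and> (Dp \<le> 2 * D \<and> distinct (map (\<lambda>j. (\<phi> ^^ j) x1) [0..<Dp - 1])
        \<longrightarrow> mat_rank (rows_mat D (map (row_grad \<phi> e1 D x1) [1..<Dp]))
            = Dp - 1)"
proof -
  obtain D\<phi> :: "'a \<Rightarrow> 'a \<Rightarrow>\<^sub>L 'a" where \<phi>': "\<And>x. (\<phi> has_derivative blinfun_apply (D\<phi> x)) (at x)"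
    using assms(1) unfolding C2_diffeo_def C2_map_def by blast
  have "\<And>z. take (D - 1) (Vrows \<phi> e1 D z) = Vrows \<phi> e1 D z" and "(D - 1) + (D - 1) = 2 * (D - 1)"
    by (simp_all add: Vrows_def)
  note part_a = rank_Vrows_append_take[OF \<phi>' assms(2) order_refl, where D=D, unfolded this]
  show ?thesis
    using part_a rank_Vrows_append_take[OF \<phi>' assms(2)] rank_row_grad_orbit[OF \<phi>' assms(2)] by blast
qed

end
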